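(* Let $m\ge1$ be an integer and let $\delta>1$ be the positive root of $x^2-(m+1)x-1$. Let $r\in(0,1)$ be rational and suppose its Rényi $\delta$-expansion is purely periodic, $d_\delta(r)=(d_1d_2\cdots d_n)^\omega$ for some $n\ge1$. Then $d_n=0$.
   Context: The Rényi $\delta$-expansion of $x\in[0,1)$ is the greedy expansion $d_\delta(x)=d_1d_2\cdots$ defined by $r_0=x$, $d_{k+1}=\lfloor\delta r_k\rfloor$, $r_{k+1}=\delta r_k-d_{k+1}$, so that $x=\sum_{k\ge1}d_k\delta^{-k}$. For this $\delta$, the digits lie in $\{0,1,\dots,m+1\}$ and the sequences $d_{i+1}d_{i+2}\cdots$ are lexicographically smaller than $((m+1)0)^\omega$ for every $i\ge0$. *)

theory Defs
  imports Complex_Main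
begin

definition renyi_map :: "real \<Rightarrow> real \<Rightarrow> real" where
  "renyi_map \<delta> y = \<delta> * y - of_int \<lfloor>\<delta> * y\<rfloor>"

definition renyi_rem :: "real \<Rightarrow> real \<Rightarrow> nat \<Rightarrow> real" where
  "renyi_rem \<delta> x k = (renyi_map \<delta> ^^ k) x"

text \<open>renyi_digit delta x k is the digit d_k (for k >= 1): d_{k} = floor(delta * r_{k-1}).\<close>
definition renyi_digit :: "real \<Rightarrow> real \<Rightarrow> nat \<Rightarrow> int" where
  "renyi_digit \<delta> x k = \<lfloor>\<delta> * renyi_rem \<delta> x (k - 1)\<rfloor>"

end

theory Submission
  imports Defs
begin

text \<open>
  Writing \<open>c = m + 1\<close>, every remainder is \<open>r\<^sub>k = p\<^sub>k \<delta> + q\<^sub>k\<close> with rational \<open>p\<^sub>k, q\<^sub>k\<close>, by the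
  recursion \<open>r\<^sub>k\<^sub>+\<^sub>1 = \<delta> r\<^sub>k - d\<^sub>k\<^sub>+\<^sub>1\<close> and \<open>\<delta>\<^sup>2 = c\<delta> + 1\<close>. Periodicity of the digits forces \<open>r\<^sub>n = r\<close>, and
  irrationality of \<open>\<delta>\<close> gives \<open>p\<^sub>n = 0\<close>, \<open>q\<^sub>n = r\<close>. The same recursion holds for the conjugate
  values \<open>s\<^sub>k = p\<^sub>k \<delta>' + q\<^sub>k\<close>, \<open>\<delta>' = -1/\<delta>\<close>, and since the digits lie in \<open>[0, c]\<close> these stay in
  \<open>(-\<delta>, 1)\<close>. Hence \<open>r = s\<^sub>n = \<delta>' s\<^sub>n\<^sub>-\<^sub>1 - d\<^sub>n < 1 - d\<^sub>n\<close>, so \<open>d\<^sub>n < 1\<close>.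
\<close>

lemma renyi_rem_Suc:
  "renyi_rem \<delta> x (Suc k) = \<delta> * renyi_rem \<delta> x k - of_int (renyi_digit \<delta> x (Suc k))"
  by (simp add: renyi_rem_def renyi_digit_def renyi_map_def)

lemma renyi_rem_bounds:
  assumes "0 \<le> x" "x < 1"
  shows "0 \<le> renyi_rem \<delta> x k \<and> renyi_rem \<delta> x k < 1"
proof (cases k)
  case (Suc j)
  then show ?thesis
    by (simp add: renyi_rem_def renyi_map_def) linarith
qed (use assms in \<open>simp add: renyi_rem_def\<close>)

lemma renyi_digit_bounds:
  assumes "0 < \<delta>" "0 \<le> x" "x < 1"
  shows "0 \<le> renyi_digit \<delta> x (Suc k) \<and> of_int (renyi_digit \<delta> x (Suc k)) < \<delta>"
proof -
  have "0 \<le> \<delta> * renyi_rem \<delta> x k" "\<delta> * renyi_rem \<delta> x k < \<delta>"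
    using renyi_rem_bounds[OF assms(2,3), of \<delta> k] assms(1) by simp_all
  moreover have "of_int \<lfloor>\<delta> * renyi_rem \<delta> x k\<rfloor> \<le> \<delta> * renyi_rem \<delta> x k"
    by (rule of_int_floor_le)
  ultimately show ?thesis
    unfolding renyi_digit_def diff_Suc_1 by (intro conjI) (simp, linarith)
qed

lemma renyi_rem_shift_diff:
  assumes "\<forall>k\<ge>1. renyi_digit \<delta> x (k + n) = renyi_digit \<delta> x k"
  shows "renyi_rem \<delta> x (n + k) - renyi_rem \<delta> x k = \<delta> ^ k * (renyi_rem \<delta> x n - x)"
proof (induction k)
  case (Suc k)
  have "renyi_digit \<delta> x (n + Suc k) = renyi_digit \<delta> x (Suc k)"
    using assms by (metis add.commute le_add1 plus_1_eq_Suc)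
  then have "renyi_rem \<delta> x (n + Suc k) - renyi_rem \<delta> x (Suc k)
      = \<delta> * (renyi_rem \<delta> x (n + k) - renyi_rem \<delta> x k)"
    by (simp add: renyi_rem_Suc algebra_simps)
  then show ?case
    using Suc by simp
qed (simp add: renyi_rem_def)

text \<open>A purely periodic digit sequence comes from a purely periodic orbit: otherwise the
  discrepancy \<open>r\<^sub>n - r\<close> would be blown up by the expanding map beyond the width of \<open>[0, 1)\<close>.\<close>

lemma renyi_rem_periodic:
  assumes "\<delta> > 1" "0 \<le> x" "x < 1"
    and "\<forall>k\<ge>1. renyi_digit \<delta> x (k + n) = renyi_digit \<delta> x k"
  shows "renyi_rem \<delta> x n = x"
proof (rule ccontr)
  define e where "e = \<bar>renyi_rem \<delta> x n - x\<bar>"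
  assume "renyi_rem \<delta> x n \<noteq> x"
  then have "e > 0"
    by (simp add: e_def)
  obtain k where "1 / e < \<delta> ^ k"
    using real_arch_pow assms(1) by blast
  then have "1 < \<delta> ^ k * e"
    using \<open>e > 0\<close> by (simp add: field_simps)
  moreover have "\<delta> ^ k * e = \<bar>renyi_rem \<delta> x (n + k) - renyi_rem \<delta> x k\<bar>"
    using renyi_rem_shift_diff[OF assms(4), of k] assms(1) by (simp add: e_def abs_mult)
  moreover have "\<bar>renyi_rem \<delta> x (n + k) - renyi_rem \<delta> x k\<bar> < 1"
    using renyi_rem_bounds[OF assms(2,3), of \<delta> "n + k"] renyi_rem_bounds[OF assms(2,3), of \<delta> k]
    unfolding abs_less_iff by linarith
  ultimately show False
    by linarith
qed

lemma quadratic_root_bounds: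
  fixes \<delta> c :: real
  assumes "\<delta> > 1" "\<delta> * \<delta> = c * \<delta> + 1"
  shows "c < \<delta>" "\<delta> < c + 1"
proof -
  have "\<delta> = c + 1 / \<delta>"
    using assms by (simp add: field_simps)
  moreover have "0 < 1 / \<delta>" "1 / \<delta> < 1"
    using assms(1) by auto
  ultimately show "c < \<delta>" "\<delta> < c + 1"
    by linarith+
qed

lemma rational_root_integral:
  fixes \<delta> :: real and c :: int
  assumes "\<delta> \<in> \<rat>" "\<delta> * \<delta> = of_int c * \<delta> + 1"
  shows "\<delta> \<in> \<int>"
proof -
  obtain a b where ab: "\<delta> = of_int a / of_int b" "b > 0" "coprime a b"
    using assms(1) by (rule Rats_cases') blast
  then have "of_int a = \<delta> * of_int b"
    by simp
  then have "of_int a * of_int a = (\<delta> * \<delta>) * (of_int b * of_int b)"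
    by (simp add: algebra_simps)
  also have "\<dots> = of_int c * (\<delta> * of_int b) * of_int b + of_int b * (of_int b :: real)"
    using assms(2) by (simp add: algebra_simps)
  finally have "of_int a * of_int a = of_int c * of_int a * of_int b + of_int b * (of_int b :: real)"
    using \<open>of_int a = \<delta> * of_int b\<close> by simp
  then have "a * a = b * (c * a + b)"
    by (simp add: algebra_simps flip: of_int_mult of_int_add of_int_eq_iff)
  then have "b dvd a * a"
    by simp
  have "coprime b (a * a)"
    using ab(3) by (simp add: coprime_commute)
  then have "is_unit b"
    using \<open>b dvd a * a\<close> by (rule coprime_common_divisor[OF _ dvd_refl])
  then have "b = 1"
    using ab(2) by simp
  then show ?thesis
    using ab(1) by simp
qed

lemma quadratic_root_irrational:
  fixes \<delta> :: real and m :: nat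
  assumes "\<delta> > 1" "\<delta> * \<delta> = (real m + 1) * \<delta> + 1"
  shows "\<delta> \<notin> \<rat>"
proof
  assume "\<delta> \<in> \<rat>"
  then have "\<delta> \<in> \<int>"
    using rational_root_integral[of \<delta> "int m + 1"] assms(2) by simp
  then obtain a where "\<delta> = of_int a"
    by (auto elim: Ints_cases)
  with quadratic_root_bounds[OF assms] have "int m + 1 < a" "a < int m + 2"
    by simp_all
  then show False
    by simp
qed

lemma quadratic_renyi_digit_bounds:
  fixes \<delta> :: real and m :: nat
  assumes "\<delta> > 1" "\<delta> * \<delta> = (real m + 1) * \<delta> + 1" "0 \<le> x" "x < 1"
  shows "0 \<le> renyi_digit \<delta> x (Suc k) \<and> of_int (renyi_digit \<delta> x (Suc k)) \<le> real m + 1"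
proof -
  have "of_int (renyi_digit \<delta> x (Suc k)) < real m + 2"
    using renyi_digit_bounds[of \<delta> x k] quadratic_root_bounds[OF assms(1,2)] assms by simp
  then have "renyi_digit \<delta> x (Suc k) \<le> int m + 1"
    by linarith
  moreover have "0 \<le> renyi_digit \<delta> x (Suc k)"
    using renyi_digit_bounds[of \<delta> x k] assms by simp
  ultimately show ?thesis
    by (intro conjI) linarith+
qed

lemma irrational_rational_combination:
  fixes \<delta> p q r :: real
  assumes "\<delta> \<notin> \<rat>" "p \<in> \<rat>" "q \<in> \<rat>" "r \<in> \<rat>" "\<delta> * p + q = r"
  shows "p = 0 \<and> q = r"
proof -
  have "p = 0"
  proof (rule ccontr)
    assume "p \<noteq> 0"
    with assms(5) have "\<delta> = (r - q) / p"
      by (simp add: field_simps)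
    with assms(1-4) show False
      by simp
  qed
  with assms(5) show ?thesis
    by simp
qed

text \<open>Coordinates \<open>(p\<^sub>k, q\<^sub>k)\<close> of the remainders in the basis \<open>(\<delta>, 1)\<close>, computed without reference
  to \<open>\<delta>\<close>; evaluating them at either root of \<open>y\<^sup>2 = c y + 1\<close> gives the remainders or their
  conjugates.\<close>

fun quad_coords :: "real \<Rightarrow> real \<Rightarrow> (nat \<Rightarrow> int) \<Rightarrow> nat \<Rightarrow> real \<times> real" where
  "quad_coords c x D 0 = (0, x)"
| "quad_coords c x D (Suc k) =
    (c * fst (quad_coords c x D k) + snd (quad_coords c x D k),
     fst (quad_coords c x D k) - of_int (D (Suc k)))"

definition quad_eval :: "real \<Rightarrow> real \<Rightarrow> (nat \<Rightarrow> int) \<Rightarrow> real \<Rightarrow> nat \<Rightarrow> real" where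
  "quad_eval c x D y k = y * fst (quad_coords c x D k) + snd (quad_coords c x D k)"

lemma quad_coords_rational:
  "c \<in> \<rat> \<Longrightarrow> x \<in> \<rat> \<Longrightarrow> fst (quad_coords c x D k) \<in> \<rat> \<and> snd (quad_coords c x D k) \<in> \<rat>"
  by (induction k) auto

lemma quad_eval_0 [simp]: "quad_eval c x D y 0 = x"
  by (simp add: quad_eval_def)

lemma quad_eval_Suc:
  assumes "y * y = c * y + 1"
  shows "quad_eval c x D y (Suc k) = y * quad_eval c x D y k - of_int (D (Suc k))"
proof -
  have "y * (c * fst (quad_coords c x D k)) + fst (quad_coords c x D k)
      = (y * y) * fst (quad_coords c x D k)"
    using assms by (simp add: algebra_simps)
  then show ?thesis
    by (simp add: quad_eval_def algebra_simps)
qed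

lemma renyi_rem_eq_quad_eval:
  assumes "\<delta> * \<delta> = c * \<delta> + 1"
  shows "renyi_rem \<delta> x k = quad_eval c x (renyi_digit \<delta> x) \<delta> k"
proof (induction k)
  case (Suc k)
  then show ?case
    using renyi_rem_Suc[of \<delta> x k] quad_eval_Suc[OF assms] by simp
qed (simp add: renyi_rem_def)

lemma quadratic_conj_root:
  fixes \<delta> c :: real
  assumes "\<delta> \<noteq> 0" "\<delta> * \<delta> = c * \<delta> + 1"
  shows "(-1 / \<delta>) * (-1 / \<delta>) = c * (-1 / \<delta>) + 1"
proof -
  have "c * (-1 / \<delta>) + 1 = (\<delta> * \<delta> - c * \<delta>) / (\<delta> * \<delta>)"
    using assms(1) by (simp add: field_simps)
  also have "\<dots> = (-1 / \<delta>) * (-1 / \<delta>)"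
    using assms(2) by simp
  finally show ?thesis ..
qed

lemma quad_eval_conj_bounds:
  assumes "\<delta> > 0" "\<delta> * \<delta> = c * \<delta> + 1"
    and "\<And>k. 0 \<le> D (Suc k) \<and> of_int (D (Suc k)) \<le> c"
    and "-\<delta> < x" "x < 1"
  shows "-\<delta> < quad_eval c x D (-1 / \<delta>) k \<and> quad_eval c x D (-1 / \<delta>) k < 1"
proof (induction k)
  case (Suc k)
  let ?s = "quad_eval c x D (-1 / \<delta>) k"
  have "\<delta> \<noteq> 0"
    using assms(1) by simp
  then have "quad_eval c x D (-1 / \<delta>) (Suc k) = (-1 / \<delta>) * ?s - of_int (D (Suc k))"
    by (rule quad_eval_Suc[OF quadratic_conj_root[OF _ assms(2)]])
  moreover have "-1 / \<delta> < (-1 / \<delta>) * ?s" "(-1 / \<delta>) * ?s < 1"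
    using Suc assms(1) by (simp_all add: field_simps)
  moreover have "\<delta> = c + 1 / \<delta>"
    using assms(1,2) by (simp add: field_simps)
  ultimately show ?case
    using assms(3)[of k] by linarith
qed (use assms in simp)

lemma quad_eval_conj_last_digit:
  assumes "\<delta> > 0" "\<delta> * \<delta> = c * \<delta> + 1"
    and "\<And>k. 0 \<le> D (Suc k) \<and> of_int (D (Suc k)) \<le> c"
    and "-\<delta> < x" "x < 1"
  shows "quad_eval c x D (-1 / \<delta>) (Suc k) + of_int (D (Suc k)) < 1"
proof -
  have "-\<delta> < quad_eval c x D (-1 / \<delta>) k"
    using quad_eval_conj_bounds[of \<delta> c D x k, OF assms] by simp
  then have "(-1 / \<delta>) * quad_eval c x D (-1 / \<delta>) k < 1"
    using assms(1) by (simp add: field_simps)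
  moreover have "\<delta> \<noteq> 0"
    using assms(1) by simp
  ultimately show ?thesis
    using quad_eval_Suc[OF quadratic_conj_root[OF _ assms(2)], of x D k] by simp
qed

theorem mainTheorem11:
  fixes m n :: nat and \<delta> r :: real
  assumes "m \<ge> 1"
    and "\<delta> > 1" and "\<delta>\<^sup>2 - (real m + 1) * \<delta> - 1 = 0"
    and "r \<in> \<rat>" and "0 < r" and "r < 1"
    and "n \<ge> 1"
    and "\<forall>k\<ge>1. renyi_digit \<delta> r (k + n) = renyi_digit \<delta> r k"
  shows "renyi_digit \<delta> r n = 0"
proof -
  define c where "c = real m + 1"
  define D where "D = renyi_digit \<delta> r"
  have quad: "\<delta> * \<delta> = c * \<delta> + 1"
    using assms(3) by (simp add: c_def power2_eq_square)
  have digits: "\<And>k. 0 \<le> D (Suc k) \<and> of_int (D (Suc k)) \<le> c"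
    using quadratic_renyi_digit_bounds[of \<delta> m r] quad assms(2,5,6) by (simp add: c_def D_def)
  have "\<delta> * fst (quad_coords c r D n) + snd (quad_coords c r D n) = r"
    using renyi_rem_eq_quad_eval[OF quad, of r n] renyi_rem_periodic[of \<delta> r n] assms
    by (simp add: quad_eval_def D_def)
  moreover have "\<delta> \<notin> \<rat>"
    using quadratic_root_irrational[of \<delta> m] quad assms(2) by (simp add: c_def)
  moreover have "fst (quad_coords c r D n) \<in> \<rat> \<and> snd (quad_coords c r D n) \<in> \<rat>"
    using quad_coords_rational assms(4) by (simp add: c_def)
  ultimately have "fst (quad_coords c r D n) = 0 \<and> snd (quad_coords c r D n) = r"
    using irrational_rational_combination assms(4) by blast
  then have "quad_eval c r D (-1 / \<delta>) n = r"
    by (simp add: quad_eval_def)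
  moreover obtain j where "n = Suc j"
    using assms(7) by (cases n) auto
  ultimately have "r + of_int (D n) < 1"
    using quad_eval_conj_last_digit[of \<delta> c D r j, OF _ quad digits] assms(2,5,6) by simp
  then show ?thesis
    using digits[of j] \<open>n = Suc j\<close> assms(5) by (simp add: D_def)
qed

end
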